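(* Let $n\ge2$, $\omega\in\mathbb{R}^n$, $k\in\mathbb{R}_{>0}^n$ satisfy (IC1) $\sum_\mu\omega_\mu=0$, (IC2) $\omega\ne0$, (IC3) $\left|\frac{\omega_1}{k_1}\right|\le\cdots\le\left|\frac{\omega_n}{k_n}\right|$. For $\sigma\in\{-1,+1\}^n$ let $f_\sigma(R)=-R+\frac1n\sum_{\mu=1}^n\sigma_\mu\sqrt{k_\mu^2R-\omega_\mu^2}$. Let $\sigma\in\{-1,+1\}^n$ and $\mu$ be an index with $\sigma_\mu=+1$, and let $\sigma'$ be given by $\sigma'_\mu=-1$ and $\sigma'_\nu=\sigma_\nu$ for $\nu\ne\mu$. If $f_\sigma$ has no positive roots, then $f_{\sigma'}$ has no positive roots.
   Context: Square roots are nonnegative real square roots; a positive root of $f_\sigma$ is a real $R>0$ with $k_\mu^2R-\omega_\mu^2\ge0$ for all $\mu$ and $f_\sigma(R)=0$. *)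

theory Defs
  imports Complex_Main
begin

text \<open>Indices are 0..<n. Vectors are functions nat => real, relevant only below n.\<close>

definition f_sigma :: "nat \<Rightarrow> (nat \<Rightarrow> real) \<Rightarrow> (nat \<Rightarrow> real) \<Rightarrow> (nat \<Rightarrow> real) \<Rightarrow> real \<Rightarrow> real" where
  "f_sigma n \<omega> k \<sigma> R = - R + (1 / real n) * (\<Sum>\<mu><n. \<sigma> \<mu> * sqrt ((k \<mu>)\<^sup>2 * R - (\<omega> \<mu>)\<^sup>2))"

definition positive_root :: "nat \<Rightarrow> (nat \<Rightarrow> real) \<Rightarrow> (nat \<Rightarrow> real) \<Rightarrow> (nat \<Rightarrow> real) \<Rightarrow> real \<Rightarrow> bool" where
  "positive_root n \<omega> k \<sigma> R \<longleftrightarrow> R > 0 \<and> (\<forall>\<mu><n. (k \<mu>)\<^sup>2 * R - (\<omega> \<mu>)\<^sup>2 \<ge> 0) \<and> f_sigma n \<omega> k \<sigma> R = 0"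

end

theory Submission
  imports Defs
begin

text \<open>Flipping a sign \<open>\<sigma>\<^sub>\<mu>\<close> from \<open>+1\<close> to \<open>-1\<close> can only decrease \<open>f\<close>: at a positive root \<open>R\<close>
  of \<open>f\<^sub>\<sigma>\<^sub>'\<close> we get \<open>f\<^sub>\<sigma>(R) \<ge> 0\<close>. Since the sum in \<open>f\<^sub>\<sigma>\<close> grows only like \<open>\<surd>R\<close>, \<open>f\<^sub>\<sigma>\<close> is
  eventually negative, so the intermediate value theorem yields a root of \<open>f\<^sub>\<sigma>\<close> beyond \<open>R\<close>, where
  all square roots are still real.\<close>

lemma radicand_nonneg_mono:
  fixes k \<omega> R x :: real
  assumes "k\<^sup>2 * R - \<omega>\<^sup>2 \<ge> 0" and "R \<le> x"
  shows "k\<^sup>2 * x - \<omega>\<^sup>2 \<ge> 0"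
proof -
  have "k\<^sup>2 * R \<le> k\<^sup>2 * x"
    using assms(2) by (simp add: mult_left_mono)
  with assms(1) show ?thesis by linarith
qed

lemma f_sigma_flip_sign:
  assumes "\<mu> < n" and "\<sigma> \<mu> = 1"
  shows "f_sigma n \<omega> k (\<sigma>(\<mu> := -1)) R
           = f_sigma n \<omega> k \<sigma> R - (2 / real n) * sqrt ((k \<mu>)\<^sup>2 * R - (\<omega> \<mu>)\<^sup>2)"
proof -
  define g where "g i = sqrt ((k i)\<^sup>2 * R - (\<omega> i)\<^sup>2)" for i
  have "(\<Sum>i<n. (\<sigma>(\<mu> := -1)) i * g i) = (\<Sum>i<n. \<sigma> i * g i - (if i = \<mu> then 2 * g i else 0))"
    by (rule sum.cong) (auto simp: assms(2))
  also have "\<dots> = (\<Sum>i<n. \<sigma> i * g i) - 2 * g \<mu>"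
    by (simp add: sum_subtractf assms(1))
  finally have "(\<Sum>i<n. (\<sigma>(\<mu> := -1)) i * g i) = (\<Sum>i<n. \<sigma> i * g i) - 2 * g \<mu>" .
  then show ?thesis
    unfolding f_sigma_def g_def[symmetric] by (simp add: right_diff_distrib)
qed

lemma f_sigma_le_sqrt_bound:
  assumes sig: "\<forall>i<n. \<bar>\<sigma> i\<bar> \<le> 1"
    and dom: "\<forall>i<n. (k i)\<^sup>2 * x - (\<omega> i)\<^sup>2 \<ge> 0"
  shows "f_sigma n \<omega> k \<sigma> x \<le> - x + (1 / real n) * ((\<Sum>i<n. \<bar>k i\<bar>) * sqrt x)"
proof -
  have term_bound: "\<sigma> i * sqrt ((k i)\<^sup>2 * x - (\<omega> i)\<^sup>2) \<le> \<bar>k i\<bar> * sqrt x" if "i < n" for i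
  proof -
    let ?g = "sqrt ((k i)\<^sup>2 * x - (\<omega> i)\<^sup>2)"
    have "0 \<le> ?g" using dom that by simp
    have "\<sigma> i \<le> 1" using sig that abs_le_D1 by blast
    then have "\<sigma> i * ?g \<le> ?g"
      using mult_right_mono[of "\<sigma> i" 1 ?g] \<open>0 \<le> ?g\<close> by simp
    also have "\<dots> \<le> sqrt ((k i)\<^sup>2 * x)"
      by (rule real_sqrt_le_mono) simp
    also have "\<dots> = \<bar>k i\<bar> * sqrt x"
      by (simp add: real_sqrt_mult)
    finally show ?thesis .
  qed
  have "(\<Sum>i<n. \<sigma> i * sqrt ((k i)\<^sup>2 * x - (\<omega> i)\<^sup>2)) \<le> (\<Sum>i<n. \<bar>k i\<bar> * sqrt x)"
    using term_bound by (intro sum_mono) auto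
  also have "\<dots> = (\<Sum>i<n. \<bar>k i\<bar>) * sqrt x"
    by (simp add: sum_distrib_right)
  finally show ?thesis
    by (simp add: f_sigma_def divide_right_mono)
qed

lemma f_sigma_eventually_nonpos:
  assumes "n \<ge> 1" and "\<forall>i<n. \<bar>\<sigma> i\<bar> \<le> 1"
    and R: "R > 0" "\<forall>i<n. (k i)\<^sup>2 * R - (\<omega> i)\<^sup>2 \<ge> 0"
  obtains x where "R \<le> x" and "f_sigma n \<omega> k \<sigma> x \<le> 0"
proof
  define K where "K = (\<Sum>i<n. \<bar>k i\<bar>)"
  define x where "x = max R (K\<^sup>2 + 1)"
  show "R \<le> x" unfolding x_def by simp
  have "x > 0" using R by (simp add: x_def)
  have "K < sqrt x"
  proof -
    have "K \<le> sqrt (K\<^sup>2)" by simp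
    also have "\<dots> < sqrt (K\<^sup>2 + 1)" by (rule real_sqrt_less_mono) simp
    also have "\<dots> \<le> sqrt x" unfolding x_def by simp
    finally show ?thesis .
  qed
  then have "K * sqrt x \<le> sqrt x * sqrt x"
    using \<open>x > 0\<close> by (intro mult_right_mono) simp_all
  also have "\<dots> = x" using \<open>x > 0\<close> by simp
  also have "\<dots> \<le> real n * x" using \<open>n \<ge> 1\<close> \<open>x > 0\<close> by simp
  finally have "(1 / real n) * (K * sqrt x) \<le> x"
    using \<open>n \<ge> 1\<close> by (simp add: field_simps)
  moreover have "\<forall>i<n. (k i)\<^sup>2 * x - (\<omega> i)\<^sup>2 \<ge> 0"
    using R(2) \<open>R \<le> x\<close> radicand_nonneg_mono by blast
  ultimately show "f_sigma n \<omega> k \<sigma> x \<le> 0"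
    using f_sigma_le_sqrt_bound[OF assms(2)] unfolding K_def by fastforce
qed

lemma positive_root_between:
  assumes R: "R > 0" "\<forall>i<n. (k i)\<^sup>2 * R - (\<omega> i)\<^sup>2 \<ge> 0"
    and "R \<le> R'" and "f_sigma n \<omega> k \<sigma> R \<ge> 0" and "f_sigma n \<omega> k \<sigma> R' \<le> 0"
  shows "\<exists>x. positive_root n \<omega> k \<sigma> x"
proof -
  have "continuous_on {R..R'} (f_sigma n \<omega> k \<sigma>)"
    unfolding f_sigma_def by (intro continuous_intros)
  then obtain x where x: "R \<le> x" "x \<le> R'" "f_sigma n \<omega> k \<sigma> x = 0"
    using IVT2'[of "f_sigma n \<omega> k \<sigma>" R' 0 R] assms by blast
  have "\<forall>i<n. (k i)\<^sup>2 * x - (\<omega> i)\<^sup>2 \<ge> 0"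
    using R(2) x(1) radicand_nonneg_mono by blast
  with x R(1) show ?thesis
    unfolding positive_root_def by (intro exI[of _ x]) auto
qed

theorem lemma2:
  fixes n :: nat and \<omega> k \<sigma> :: "nat \<Rightarrow> real" and \<mu> :: nat
  assumes n2: "n \<ge> 2"
    and kpos: "\<forall>i<n. k i > 0"
    and IC1: "(\<Sum>i<n. \<omega> i) = 0"
    and IC2: "\<exists>i<n. \<omega> i \<noteq> 0"
    and IC3: "\<forall>i j. i \<le> j \<and> j < n \<longrightarrow> \<bar>\<omega> i / k i\<bar> \<le> \<bar>\<omega> j / k j\<bar>"
    and sig: "\<forall>i<n. \<sigma> i = -1 \<or> \<sigma> i = 1"
    and mu: "\<mu> < n" "\<sigma> \<mu> = 1"
    and noroot: "\<not> (\<exists>R. positive_root n \<omega> k \<sigma> R)"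
  shows "\<not> (\<exists>R. positive_root n \<omega> k (\<sigma>(\<mu> := -1)) R)"
proof
  assume "\<exists>R. positive_root n \<omega> k (\<sigma>(\<mu> := -1)) R"
  then obtain R where R: "R > 0" "\<forall>i<n. (k i)\<^sup>2 * R - (\<omega> i)\<^sup>2 \<ge> 0"
    and root: "f_sigma n \<omega> k (\<sigma>(\<mu> := -1)) R = 0"
    unfolding positive_root_def by blast
  have "f_sigma n \<omega> k \<sigma> R \<ge> 0"
    using root R(2) mu f_sigma_flip_sign[of \<mu> n \<sigma> \<omega> k R] by simp
  moreover have "\<forall>i<n. \<bar>\<sigma> i\<bar> \<le> 1"
    using sig by fastforce
  then obtain R' where "R \<le> R'" "f_sigma n \<omega> k \<sigma> R' \<le> 0"
    using f_sigma_eventually_nonpos[of n \<sigma> R k \<omega>] n2 R by auto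
  ultimately have "\<exists>x. positive_root n \<omega> k \<sigma> x"
    using positive_root_between[OF R] by blast
  with noroot show False ..
qed

end
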